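(* Let $q\ge 2$ and $n\ge 1$ be integers, $N=\{1,\dots,n\}$, $F^c=\{-\tfrac{q-1}{2},-\tfrac{q-3}{2},\dots,\tfrac{q-3}{2},\tfrac{q-1}{2}\}$ and $\Omega=(F^c)^N$. For each subset $A\subset N$ with $|A|\ge 2$ let $J_A\ge 0$ be given, and define $H_\gamma=-\sum_{A}J_A\,\delta_{(\sigma^A)_\gamma}$, where for $A=\{i_1,\dots,i_k\}$, $\delta_{(\sigma^A)_\gamma}=1$ if $(\sigma_{i_1})_\gamma=\dots=(\sigma_{i_k})_\gamma$ and $0$ otherwise. Let $Z_\gamma=\exp(-H_\gamma)=\prod_A x_A^{\delta_{(\sigma^A)_\gamma}}$ with $x_A=e^{J_A}$, $Z=\sum_{\gamma\in\Omega}Z_\gamma$ and $P(\gamma)=Z_\gamma/Z$. For a finite list $R$ of elements of $N$ (repetitions allowed) set $\sigma^R=\prod_{i\in R}\sigma_i$ (product over the list with multiplicity, $\sigma^\emptyset\equiv1$), where $\sigma_i(\gamma)=(\sigma_i)_\gamma$ is the $i$-th coordinate of $\gamma$. Then for every such list $R$, $$\langle\sigma^R\rangle=\sum_{\gamma\in\Omega}(\sigma^R)_\gamma P(\gamma)\ \ge 0.$$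
   Context: This is a generalized ferromagnetic $q$-state Potts model with multi-spin interactions, with spin values taken in the centered set $F^c$ (equivalently, $\sigma_i$ is the Potts spin in $\{1,\dots,q\}$ minus $(q+1)/2$); the inverse temperature is set to $1$. The paper formally also permits $J_A=+\infty$. *)

theory Defs
  imports Complex_Main "HOL-Library.FuncSet"
begin

definition Fc :: "nat \<Rightarrow> real set" where
  "Fc q = {real k - (real q + 1) / 2 | k. k \<in> {1..q}}"

definition Omega :: "nat \<Rightarrow> nat \<Rightarrow> (nat \<Rightarrow> real) set" where
  "Omega q n = PiE {1..n} (\<lambda>_. Fc q)"

definition interactions :: "nat \<Rightarrow> nat set set" where
  "interactions n = {A. A \<subseteq> {1..n} \<and> card A \<ge> 2}"

definition delta :: "nat set \<Rightarrow> (nat \<Rightarrow> real) \<Rightarrow> real" where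
  "delta A \<gamma> = (if \<forall>i\<in>A. \<forall>j\<in>A. \<gamma> i = \<gamma> j then 1 else 0)"

definition hamiltonian :: "nat \<Rightarrow> (nat set \<Rightarrow> real) \<Rightarrow> (nat \<Rightarrow> real) \<Rightarrow> real" where
  "hamiltonian n J \<gamma> = - (\<Sum>A\<in>interactions n. J A * delta A \<gamma>)"

definition weight :: "nat \<Rightarrow> (nat set \<Rightarrow> real) \<Rightarrow> (nat \<Rightarrow> real) \<Rightarrow> real" where
  "weight n J \<gamma> = exp (- hamiltonian n J \<gamma>)"

definition partition_fn :: "nat \<Rightarrow> nat \<Rightarrow> (nat set \<Rightarrow> real) \<Rightarrow> real" where
  "partition_fn q n J = (\<Sum>\<gamma>\<in>Omega q n. weight n J \<gamma>)"

definition prob :: "nat \<Rightarrow> nat \<Rightarrow> (nat set \<Rightarrow> real) \<Rightarrow> (nat \<Rightarrow> real) \<Rightarrow> real" where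
  "prob q n J \<gamma> = weight n J \<gamma> / partition_fn q n J"

definition spin_prod :: "nat list \<Rightarrow> (nat \<Rightarrow> real) \<Rightarrow> real" where
  "spin_prod R \<gamma> = prod_list (map \<gamma> R)"

definition expect :: "nat \<Rightarrow> nat \<Rightarrow> (nat set \<Rightarrow> real) \<Rightarrow> nat list \<Rightarrow> real" where
  "expect q n J R = (\<Sum>\<gamma>\<in>Omega q n. spin_prod R \<gamma> * prob q n J \<gamma>)"

end

theory Submission
  imports Defs
begin

text \<open>
  Writing each Boltzmann factor as exp (J A * delta A) = 1 + (exp (J A) - 1) * delta A and
  multiplying out turns the unnormalised expectation of \<sigma>^R into a combination, with
  nonnegative coefficients, of sums of \<sigma>^R over the configurations that are constant on
  every block of a family S of interaction sets.  Such a constrained sum factorises over the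
  clusters of the constraint graph into power sums of F^c, which are nonnegative because F^c
  is symmetric about 0.  The factorisation eliminates one site at a time: a site tied to
  another one is identified with it, an isolated site splits off one power sum.
\<close>

definition agree :: "('a \<times> 'a) set \<Rightarrow> ('a \<Rightarrow> 'b) \<Rightarrow> real" where
  "agree E \<gamma> = (if \<forall>(i, j)\<in>E. \<gamma> i = \<gamma> j then 1 else 0)"

lemma agree_empty [simp]: "agree {} \<gamma> = 1"
  by (simp add: agree_def)

lemma agree_Un: "agree (E \<union> F) \<gamma> = agree E \<gamma> * agree F \<gamma>"
  by (auto simp: agree_def)

lemma delta_eq_agree: "delta A \<gamma> = agree (A \<times> A) \<gamma>"
  by (auto simp: delta_def agree_def)

lemma prod_delta_eq_agree:
  assumes "finite S"
  shows "(\<Prod>A\<in>S. delta A \<gamma>) = agree (\<Union>A\<in>S. A \<times> A) \<gamma>"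
  using assms by (induction S rule: finite_induct) (simp_all add: agree_Un delta_eq_agree)

lemma agree_comp: "agree E (\<gamma> \<circ> r) = agree (map_prod r r ` E) \<gamma>"
  by (simp add: agree_def case_prod_beta)

lemma agree_fun_upd_isolated:
  assumes "\<And>w. (v, w) \<in> E \<or> (w, v) \<in> E \<Longrightarrow> w = v"
  shows "agree E (\<gamma>(v := x)) = agree (E - {(v, v)}) \<gamma>"
proof -
  have avoid: "i \<noteq> v \<and> j \<noteq> v" if "(i, j) \<in> E - {(v, v)}" for i j
    using assms that by blast
  have "(\<forall>(i, j)\<in>E - {(v, v)}. (\<gamma>(v := x)) i = (\<gamma>(v := x)) j) \<longleftrightarrow> (\<forall>(i, j)\<in>E - {(v, v)}. \<gamma> i = \<gamma> j)"
  proof (intro ball_cong refl)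
    fix p assume p: "p \<in> E - {(v, v)}"
    obtain i j where "p = (i, j)" by fastforce
    with avoid[of i j] p show "(case p of (i, j) \<Rightarrow> (\<gamma>(v := x)) i = (\<gamma>(v := x)) j) \<longleftrightarrow> (case p of (i, j) \<Rightarrow> \<gamma> i = \<gamma> j)"
      by simp
  qed
  moreover have "(\<forall>(i, j)\<in>E. (\<gamma>(v := x)) i = (\<gamma>(v := x)) j) \<longleftrightarrow> (\<forall>(i, j)\<in>E - {(v, v)}. (\<gamma>(v := x)) i = (\<gamma>(v := x)) j)"
    by auto
  ultimately show ?thesis
    by (simp add: agree_def)
qed

lemma sum_fun_upd_agree_tied:
  assumes "finite Q" "\<gamma> w \<in> Q" "w \<noteq> v" "(v, w) \<in> E \<or> (w, v) \<in> E"
  shows "(\<Sum>x\<in>Q. f (\<gamma>(v := x)) * agree E (\<gamma>(v := x))) = f (\<gamma>(v := \<gamma> w)) * agree E (\<gamma>(v := \<gamma> w))"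
proof -
  have "agree E (\<gamma>(v := x)) = 0" if "x \<noteq> \<gamma> w" for x
  proof -
    have "\<not> (\<forall>(i, j)\<in>E. (\<gamma>(v := x)) i = (\<gamma>(v := x)) j)"
    proof
      assume "\<forall>(i, j)\<in>E. (\<gamma>(v := x)) i = (\<gamma>(v := x)) j"
      with assms(4) have "(\<gamma>(v := x)) v = (\<gamma>(v := x)) w"
        by auto
      with assms(3) that show False
        by simp
    qed
    then show ?thesis
      by (simp add: agree_def)
  qed
  then have "(\<Sum>x\<in>Q - {\<gamma> w}. f (\<gamma>(v := x)) * agree E (\<gamma>(v := x))) = 0"
    by simp
  then show ?thesis
    by (simp add: sum.remove[OF assms(1,2), where g = "\<lambda>x. f (\<gamma>(v := x)) * agree E (\<gamma>(v := x))"])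
qed

lemma prod_list_map_fun_upd:
  fixes \<gamma> :: "'a \<Rightarrow> 'b::comm_monoid_mult"
  shows "prod_list (map (\<gamma>(v := x)) R) = prod_list (map \<gamma> (filter (\<lambda>a. a \<noteq> v) R)) * x ^ count_list R v"
  by (induction R) (auto simp: mult_ac)

lemma sum_PiE_insert:
  assumes "v \<notin> V"
  shows "(\<Sum>\<gamma>\<in>PiE (insert v V) (\<lambda>_. Q). g \<gamma>) = (\<Sum>\<gamma>\<in>PiE V (\<lambda>_. Q). \<Sum>x\<in>Q. g (\<gamma>(v := x)))"
proof -
  have "(\<Sum>\<gamma>\<in>PiE (insert v V) (\<lambda>_. Q). g \<gamma>) = (\<Sum>p\<in>Q \<times> PiE V (\<lambda>_. Q). g ((\<lambda>(x, \<gamma>). \<gamma>(v := x)) p))"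
    unfolding PiE_insert_eq by (subst sum.reindex) (auto intro: inj_combinator[OF assms])
  also have "\<dots> = (\<Sum>x\<in>Q. \<Sum>\<gamma>\<in>PiE V (\<lambda>_. Q). g (\<gamma>(v := x)))"
    by (simp add: sum.cartesian_product case_prod_unfold)
  finally show ?thesis
    by (simp only: sum.swap[of _ Q])
qed

lemma constrained_moment_nonneg:
  fixes Q :: "real set"
  assumes "finite V" "finite Q" and power_sum_nonneg: "\<And>k. 0 \<le> (\<Sum>x\<in>Q. x ^ k)"
    and "E \<subseteq> V \<times> V" "set R \<subseteq> V"
  shows "0 \<le> (\<Sum>\<gamma>\<in>PiE V (\<lambda>_. Q). prod_list (map \<gamma> R) * agree E \<gamma>)"
  using assms(1,4,5)
proof (induction V arbitrary: E R rule: finite_induct)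
  case empty
  then show ?case by simp
next
  case (insert v V)
  have split_v: "(\<Sum>\<gamma>\<in>PiE (insert v V) (\<lambda>_. Q). prod_list (map \<gamma> R) * agree E \<gamma>)
     = (\<Sum>\<gamma>\<in>PiE V (\<lambda>_. Q). \<Sum>x\<in>Q. prod_list (map (\<gamma>(v := x)) R) * agree E (\<gamma>(v := x)))"
    by (rule sum_PiE_insert[OF insert.hyps(2)])
  show ?case
  proof (cases "\<exists>w. w \<noteq> v \<and> ((v, w) \<in> E \<or> (w, v) \<in> E)")
    case True
    then obtain w where w: "w \<noteq> v" "(v, w) \<in> E \<or> (w, v) \<in> E" by blast
    with insert.prems(1) have "w \<in> V" by auto
    define r where "r a = (if a = v then w else a)" for a
    have "\<gamma>(v := \<gamma> w) = \<gamma> \<circ> r" for \<gamma> :: "'a \<Rightarrow> real"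
      by (auto simp: r_def)
    then have tied: "(\<Sum>x\<in>Q. prod_list (map (\<gamma>(v := x)) R) * agree E (\<gamma>(v := x)))
        = prod_list (map \<gamma> (map r R)) * agree (map_prod r r ` E) \<gamma>" if "\<gamma> \<in> PiE V (\<lambda>_. Q)" for \<gamma>
      using sum_fun_upd_agree_tied[OF \<open>finite Q\<close> _ w, of \<gamma> "\<lambda>\<gamma>. prod_list (map \<gamma> R)"] that \<open>w \<in> V\<close>
      by (auto simp: agree_comp)
    have "0 \<le> (\<Sum>\<gamma>\<in>PiE V (\<lambda>_. Q). prod_list (map \<gamma> (map r R)) * agree (map_prod r r ` E) \<gamma>)"
      using insert.prems \<open>w \<in> V\<close> by (intro insert.IH) (auto simp: r_def)
    then show ?thesis
      by (simp add: split_v tied)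
  next
    case False
    define R' where "R' = filter (\<lambda>a. a \<noteq> v) R"
    have "agree E (\<gamma>(v := x)) = agree (E - {(v, v)}) \<gamma>" for \<gamma> :: "'a \<Rightarrow> real" and x
      using False by (intro agree_fun_upd_isolated) blast
    then have isolated: "(\<Sum>x\<in>Q. prod_list (map (\<gamma>(v := x)) R) * agree E (\<gamma>(v := x)))
        = prod_list (map \<gamma> R') * agree (E - {(v, v)}) \<gamma> * (\<Sum>x\<in>Q. x ^ count_list R v)" for \<gamma>
      by (simp add: prod_list_map_fun_upd R'_def sum_distrib_right mult_ac)
    have "0 \<le> (\<Sum>\<gamma>\<in>PiE V (\<lambda>_. Q). prod_list (map \<gamma> R') * agree (E - {(v, v)}) \<gamma>)"
      using insert.prems False by (intro insert.IH) (auto simp: R'_def)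
    then show ?thesis
      by (simp add: split_v isolated sum_distrib_right[symmetric] power_sum_nonneg)
  qed
qed

lemma power_sum_nonneg_if_symmetric:
  fixes Q :: "real set"
  assumes "uminus ` Q = Q"
  shows "0 \<le> (\<Sum>x\<in>Q. x ^ k)"
proof (cases "even k")
  case True
  then show ?thesis
    by (intro sum_nonneg) (simp add: zero_le_even_power)
next
  case False
  have "(\<Sum>x\<in>Q. x ^ k) = (\<Sum>x\<in>uminus ` Q. x ^ k)"
    by (simp add: assms)
  also have "\<dots> = - (\<Sum>x\<in>Q. x ^ k)"
    using False by (subst sum.reindex) (auto simp: inj_on_def sum_negf)
  finally show ?thesis
    by simp
qed

lemma finite_Fc: "finite (Fc q)"
proof -
  have "Fc q = (\<lambda>k. real k - (real q + 1) / 2) ` {1..q}"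
    by (auto simp: Fc_def)
  then show ?thesis
    by simp
qed

lemma uminus_Fc: "uminus ` Fc q = Fc q"
proof -
  have neg_in_Fc: "- x \<in> Fc q" if "x \<in> Fc q" for x
  proof -
    from that obtain k where k: "k \<in> {1..q}" "x = real k - (real q + 1) / 2"
      by (auto simp: Fc_def)
    then have "q + 1 - k \<in> {1..q}" "- x = real (q + 1 - k) - (real q + 1) / 2"
      by (auto simp: of_nat_diff)
    then show ?thesis
      unfolding Fc_def by blast
  qed
  then have "x \<in> uminus ` Fc q" if "x \<in> Fc q" for x
    using that by (intro image_eqI[of _ _ "- x"]) auto
  with neg_in_Fc show ?thesis
    by blast
qed

lemma finite_interactions: "finite (interactions n)"
  by (rule finite_subset[of _ "Pow {1..n}"]) (auto simp: interactions_def)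

lemma weight_eq_sum_agree:
  "weight n J \<gamma> = (\<Sum>S\<in>Pow (interactions n). (\<Prod>A\<in>S. exp (J A) - 1) * agree (\<Union>A\<in>S. A \<times> A) \<gamma>)"
proof -
  let ?I = "interactions n"
  have "weight n J \<gamma> = (\<Prod>A\<in>?I. (exp (J A) - 1) * delta A \<gamma> + 1)"
    unfolding weight_def hamiltonian_def
    by (simp add: exp_sum[OF finite_interactions], intro prod.cong refl) (simp add: delta_def)
  also have "\<dots> = (\<Sum>S\<in>Pow ?I. (\<Prod>A\<in>S. (exp (J A) - 1) * delta A \<gamma>) * (\<Prod>A\<in>?I - S. 1))"
    by (rule prod_add[OF finite_interactions])
  also have "\<dots> = (\<Sum>S\<in>Pow ?I. (\<Prod>A\<in>S. exp (J A) - 1) * agree (\<Union>A\<in>S. A \<times> A) \<gamma>)"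
  proof (intro sum.cong refl)
    fix S assume "S \<in> Pow ?I"
    then have "finite S"
      using finite_interactions by (auto intro: finite_subset)
    then show "(\<Prod>A\<in>S. (exp (J A) - 1) * delta A \<gamma>) * (\<Prod>A\<in>?I - S. 1)
        = (\<Prod>A\<in>S. exp (J A) - 1) * agree (\<Union>A\<in>S. A \<times> A) \<gamma>"
      by (simp add: prod.distrib prod_delta_eq_agree)
  qed
  finally show ?thesis .
qed

lemma sum_spin_prod_weight_eq:
  "(\<Sum>\<gamma>\<in>Omega q n. spin_prod R \<gamma> * weight n J \<gamma>)
    = (\<Sum>S\<in>Pow (interactions n). (\<Prod>A\<in>S. exp (J A) - 1)
         * (\<Sum>\<gamma>\<in>Omega q n. prod_list (map \<gamma> R) * agree (\<Union>A\<in>S. A \<times> A) \<gamma>))"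
  unfolding weight_eq_sum_agree spin_prod_def sum_distrib_left sum_distrib_right
  by (subst sum.swap) (simp add: mult_ac)

theorem theorem1:
  fixes q n :: nat and J :: "nat set \<Rightarrow> real" and R :: "nat list"
  assumes "q \<ge> 2" and "n \<ge> 1"
    and "\<And>A. A \<in> interactions n \<Longrightarrow> J A \<ge> 0"
    and "set R \<subseteq> {1..n}"
  shows "expect q n J R \<ge> 0"
proof -
  have "0 \<le> (\<Sum>\<gamma>\<in>Omega q n. prod_list (map \<gamma> R) * agree (\<Union>A\<in>S. A \<times> A) \<gamma>)"
    if "S \<subseteq> interactions n" for S
    unfolding Omega_def
  proof (rule constrained_moment_nonneg[OF _ finite_Fc power_sum_nonneg_if_symmetric[OF uminus_Fc]])
    show "(\<Union>A\<in>S. A \<times> A) \<subseteq> {1..n} \<times> {1..n}"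
      using that by (auto simp: interactions_def)
  qed (use assms(4) in simp_all)
  moreover have "0 \<le> (\<Prod>A\<in>S. exp (J A) - 1)" if "S \<subseteq> interactions n" for S
    using that assms(3) by (intro prod_nonneg) force
  ultimately have "0 \<le> (\<Sum>\<gamma>\<in>Omega q n. spin_prod R \<gamma> * weight n J \<gamma>)"
    unfolding sum_spin_prod_weight_eq by (intro sum_nonneg) (auto intro: mult_nonneg_nonneg)
  moreover have "0 \<le> partition_fn q n J"
    unfolding partition_fn_def weight_def by (intro sum_nonneg) simp
  ultimately show ?thesis
    unfolding expect_def prob_def by (simp add: sum_divide_distrib[symmetric])
qed

end
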